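(* Let $k\ge2$. If $x^*,y^*\in\Delta^{d-1}$ satisfy $F^k(x^* )=F^k(y^* )=\inf_{x\in\Delta^{d-1}}F^k(x)$, then $x^*=y^*$; i.e. the minimum of $F^k$ on $\Delta^{d-1}$ is attained at a unique point.
   Context: Fix $k\ge2$ and $d=4\cdot3^{k-1}$. $\Delta^{d-1}=\{x\in\mathbb{R}^d: x_i>0,\ \sum_i x_i=1\}$. For $j=1,2,3,4$, $I_j=\{(j-1)3^{k-1}+1,\dots,j\cdot3^{k-1}\}$ and $\Sigma_j(x)=\sum_{l\in I_j}x_l$. Let $\sigma(t)=(1-t)/t$. For $i\in\{1,\dots,d\}$ let $j(i)=1,4,3,2$ according as $i\equiv0,1,2,3\pmod4$, $f_i(x)=\sigma(\Sigma_{j(i)}(x))\sigma(x_i)$, and $F^k(x)=\max_{1\le i\le d}f_i(x)$. *)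

theory Defs
  imports Complex_Main
begin

text \<open>Points of R^d are functions nat => real, with coordinates indexed by 1..d
  and all other coordinates forced to be 0, so that equality of points is equality of functions.\<close>

definition dim :: "nat \<Rightarrow> nat" where
  "dim k = 4 * 3 ^ (k - 1)"

definition open_simplex :: "nat \<Rightarrow> (nat \<Rightarrow> real) set" where
  "open_simplex d = {x. (\<forall>i\<in>{1..d}. x i > 0) \<and> (\<forall>i. i \<notin> {1..d} \<longrightarrow> x i = 0)
                        \<and> (\<Sum>i=1..d. x i) = 1}"

definition block :: "nat \<Rightarrow> nat \<Rightarrow> nat set" where
  "block k j = {(j - 1) * 3 ^ (k - 1) + 1 .. j * 3 ^ (k - 1)}"

definition block_sum :: "nat \<Rightarrow> nat \<Rightarrow> (nat \<Rightarrow> real) \<Rightarrow> real" where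
  "block_sum k j x = (\<Sum>l\<in>block k j. x l)"

definition sig :: "real \<Rightarrow> real" where
  "sig t = (1 - t) / t"

definition jmap :: "nat \<Rightarrow> nat" where
  "jmap i = (if i mod 4 = 0 then 1 else if i mod 4 = 1 then 4 else if i mod 4 = 2 then 3 else 2)"

definition fcomp :: "nat \<Rightarrow> nat \<Rightarrow> (nat \<Rightarrow> real) \<Rightarrow> real" where
  "fcomp k i x = sig (block_sum k (jmap i) x) * sig (x i)"

definition Fk :: "nat \<Rightarrow> (nat \<Rightarrow> real) \<Rightarrow> real" where
  "Fk k x = Max ((\<lambda>i. fcomp k i x) ` {1..dim k})"

end

theory Submission
  imports Defs
begin

text \<open>Let n = 3^(k-1), d = 4n and C = 3(d - 1), the value of F^k at the barycenter.
  If F^k(x) \<le> C, then x_i \<ge> h(S_j(i)) for the block sums S_j = \<Sigma>_j(x), where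
  h(s) = (1-s)/(1-s+Cs) is the least t with \<sigma>(s)\<sigma>(t) \<le> C. Every block index occurs exactly
  n times as j(i), so summing over i gives 1 \<ge> n (h(S_1) + ... + h(S_4)). The convex function h
  lies above its tangent at 1/4, whose values at the S_j sum to 1/n because S_1 + ... + S_4 = 1;
  hence every S_j = 1/4, every x_i \<ge> h(1/4) = 1/d, and x is the barycenter. So the barycenter is
  the only point where F^k \<le> C, and it is the unique minimiser.\<close>

definition barycenter :: "nat \<Rightarrow> nat \<Rightarrow> real" where
  "barycenter d = (\<lambda>i. if i \<in> {1..d} then 1 / real d else 0)"

definition threshold :: "real \<Rightarrow> real \<Rightarrow> real" where
  "threshold C s = (1 - s) / (1 - s + C * s)"

lemma threshold_denom_pos:
  fixes C s :: real
  assumes "C \<ge> 1" "s > 0"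
  shows "1 - s + C * s > 0"
proof -
  have "(C - 1) * s \<ge> 0" using assms by simp
  then show ?thesis by (simp add: algebra_simps)
qed

lemma threshold_le_of_sig_mult_le:
  fixes C s t :: real
  assumes "s > 0" "t > 0" "C \<ge> 1" "sig s * sig t \<le> C"
  shows "threshold C s \<le> t"
proof -
  have D: "1 - s + C * s > 0"
    using threshold_denom_pos assms by simp
  have "(1 - s) * (1 - t) \<le> C * (s * t)"
    using assms by (simp add: sig_def divide_simps mult.commute mult.left_commute)
  then have "1 - s \<le> t * (1 - s + C * s)"
    by (simp add: algebra_simps)
  then show ?thesis
    using D by (simp add: threshold_def divide_simps mult.commute)
qed

lemma threshold_minus_tangent:
  fixes C s :: real
  assumes "C \<ge> 1" "s > 0"
  shows "threshold C s - (3 / (3 + C) - 16 * C * (s - 1/4) / (3 + C)^2)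
    = 16 * C * (C - 1) * (s - 1/4)^2 / ((1 - s + C * s) * (3 + C)^2)"
proof -
  have D: "1 - s + C * s > 0"
    using threshold_denom_pos assms by simp
  have "3 + C \<noteq> 0" using assms by simp
  with D show ?thesis
    unfolding threshold_def by (simp add: divide_simps) (simp add: algebra_simps power2_eq_square)
qed

lemma quarter_if_threshold_sum_le:
  fixes C :: real and s :: "nat \<Rightarrow> real"
  assumes C: "C > 1" and pos: "\<forall>B\<in>{1..4}. s B > 0" and sum: "(\<Sum>B=1..4. s B) = 1"
    and le: "(\<Sum>B=1..4. threshold C (s B)) \<le> 12 / (3 + C)"
    and B: "B \<in> {1..4}"
  shows "s B = 1/4"
proof -
  define T where "T t = 3 / (3 + C) - 16 * C * (t - 1/4) / (3 + C)^2" for t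
  define gap where "gap B = threshold C (s B) - T (s B)" for B
  have gap_eq: "gap B = 16 * C * (C - 1) * (s B - 1/4)^2 / ((1 - s B + C * s B) * (3 + C)^2)"
    if "B \<in> {1..4}" for B
    unfolding gap_def T_def using threshold_minus_tangent[of C "s B"] C pos that by simp
  have denom_pos: "1 - s B + C * s B > 0" if "B \<in> {1..4}" for B
    using threshold_denom_pos C pos that by simp
  have gap_nonneg: "\<forall>B\<in>{1..4}. gap B \<ge> 0"
    using gap_eq denom_pos C by (simp add: less_imp_le)
  have "(\<Sum>B=1..4. T (s B)) = 12 / (3 + C) - 16 * C / (3 + C)^2 * ((\<Sum>B=1..4. s B) - 1)"
    unfolding T_def by (simp add: numeral_eq_Suc algebra_simps add_divide_distrib diff_divide_distrib)
  then have "(\<Sum>B=1..4. gap B) \<le> 0"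
    using le sum by (simp add: gap_def sum_subtractf)
  then have "\<forall>B\<in>{1..4}. gap B = 0"
    using gap_nonneg sum_nonneg_eq_0_iff[of "{1..4}" gap] sum_nonneg[of "{1..4}" gap] by simp
  then have "(s B - 1/4)^2 = 0"
    using gap_eq[OF B] denom_pos[OF B] C B by simp
  then show ?thesis by simp
qed

lemma sum_one_to_four:
  fixes f :: "nat \<Rightarrow> 'a :: comm_monoid_add"
  shows "(\<Sum>B=1..4. f B) = f 1 + f 2 + f 3 + f 4"
  by (simp add: numeral_eq_Suc add.assoc)

lemma sum_jmap:
  fixes g :: "nat \<Rightarrow> real"
  shows "(\<Sum>i=1..4*n. g (jmap i)) = real n * (\<Sum>B=1..4. g B)"
proof (induction n)
  case 0
  then show ?case by simp
next
  case (Suc n)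
  have "(4*n + 1) mod 4 = 1" "(4*n + 2) mod 4 = 2" "(4*n + 3) mod 4 = 3" "(4*n + 4) mod 4 = 0"
    by presburger+
  then have period: "jmap (Suc (4*n)) = 4" "jmap (Suc (Suc (4*n))) = 3"
      "jmap (Suc (Suc (Suc (4*n)))) = 2" "jmap (Suc (Suc (Suc (Suc (4*n))))) = 1"
    by (simp_all add: jmap_def)
  have "4 * Suc n = Suc (Suc (Suc (Suc (4*n))))" by simp
  then have "(\<Sum>i=1..4 * Suc n. g (jmap i)) = (\<Sum>i=1..4*n. g (jmap i)) + g 4 + g 3 + g 2 + g 1"
    by (simp only: sum.cl_ivl_Suc) (simp add: period)
  then show ?case
    using Suc unfolding sum_one_to_four by (simp add: algebra_simps)
qed

lemma sum_block_sum:
  fixes x :: "nat \<Rightarrow> real"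
  shows "(\<Sum>B=1..4. block_sum k B x) = (\<Sum>i=1..dim k. x i)"
proof -
  define n where "n = (3::nat) ^ (k - 1)"
  have blocks: "block k 1 = {1..n}" "block k 2 = {n+1..n+n}"
    "block k 3 = {(n+n)+1..(n+n)+n}" "block k 4 = {(n+n+n)+1..(n+n+n)+n}"
    by (simp_all add: block_def n_def)
  have "dim k = n + n + n + n" by (simp add: dim_def n_def)
  then have "(\<Sum>i=1..dim k. x i) = (\<Sum>i=1..n+n+n. x i) + (\<Sum>i=(n+n+n)+1..(n+n+n)+n. x i)"
    by (simp only:) (rule sum.ub_add_nat, simp)
  also have "(\<Sum>i=1..n+n+n. x i) = (\<Sum>i=1..n+n. x i) + (\<Sum>i=(n+n)+1..(n+n)+n. x i)"
    by (rule sum.ub_add_nat) simp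
  also have "(\<Sum>i=1..n+n. x i) = (\<Sum>i=1..n. x i) + (\<Sum>i=n+1..n+n. x i)"
    by (rule sum.ub_add_nat) simp
  finally show ?thesis
    unfolding sum_one_to_four block_sum_def blocks by simp
qed

lemma card_block: "j \<ge> 1 \<Longrightarrow> card (block k j) = 3 ^ (k - 1)"
  by (cases j) (simp_all add: block_def)

lemma block_subset: "B \<in> {1..4} \<Longrightarrow> block k B \<subseteq> {1..dim k}"
proof -
  assume "B \<in> {1..4}"
  then have "B * 3 ^ (k - 1) \<le> 4 * (3::nat) ^ (k - 1)" by simp
  then show ?thesis by (auto simp: block_def dim_def)
qed

lemma jmap_range: "jmap i \<in> {1..4}"
  by (simp add: jmap_def)

lemma block_sum_pos:
  assumes "x \<in> open_simplex (dim k)" "B \<in> {1..4}"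
  shows "block_sum k B x > 0"
  unfolding block_sum_def
proof (rule sum_pos)
  show "finite (block k B)" by (simp add: block_def)
  show "block k B \<noteq> {}"
    using card_block[of B k] assms(2) by (metis atLeastAtMost_iff card.empty power_not_zero zero_neq_numeral)
  show "x i > 0" if "i \<in> block k B" for i
    using that block_subset[OF assms(2)] assms(1) by (auto simp: open_simplex_def)
qed

lemma threshold_le_coordinate:
  assumes x: "x \<in> open_simplex (dim k)" and F: "Fk k x \<le> C" and C: "C \<ge> 1"
    and i: "i \<in> {1..dim k}"
  shows "threshold C (block_sum k (jmap i) x) \<le> x i"
proof (rule threshold_le_of_sig_mult_le)
  have "fcomp k i x \<le> Fk k x"
    unfolding Fk_def using i by (intro Max_ge) auto
  then show "sig (block_sum k (jmap i) x) * sig (x i) \<le> C"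
    using F by (simp add: fcomp_def)
  show "block_sum k (jmap i) x > 0"
    using block_sum_pos[OF x jmap_range] .
  show "x i > 0" using x i by (simp add: open_simplex_def)
qed (rule C)

lemma barycenter_in_open_simplex: "d > 0 \<Longrightarrow> barycenter d \<in> open_simplex d"
  by (simp add: open_simplex_def barycenter_def)

lemma eq_barycenter_if_ge:
  assumes x: "x \<in> open_simplex d" and ge: "\<forall>i\<in>{1..d}. 1 / real d \<le> x i"
  shows "x = barycenter d"
proof -
  have sum: "(\<Sum>i=1..d. x i) = 1" and outside: "\<forall>i. i \<notin> {1..d} \<longrightarrow> x i = 0"
    using x by (simp_all add: open_simplex_def)
  then have "d > 0" by (intro Nat.gr0I) simp
  then have "(\<Sum>i=1..d. x i - 1 / real d) = 0"
    using sum by (simp add: sum_subtractf)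
  then have "\<forall>i\<in>{1..d}. x i - 1 / real d = 0"
    using ge by (subst sum_nonneg_eq_0_iff[symmetric]) auto
  then show ?thesis
    using outside by (auto simp: barycenter_def)
qed

lemma block_sum_barycenter:
  assumes "B \<in> {1..4}"
  shows "block_sum k B (barycenter (dim k)) = 1/4"
proof -
  have "block_sum k B (barycenter (dim k)) = (\<Sum>l\<in>block k B. 1 / real (dim k))"
    unfolding block_sum_def barycenter_def using block_subset[OF assms, of k]
    by (intro sum.cong) auto
  then show ?thesis
    using card_block[of B k] assms by (simp add: dim_def)
qed

lemma Fk_barycenter: "Fk k (barycenter (dim k)) = 3 * (real (dim k) - 1)"
proof -
  have d: "real (dim k) \<ge> 4" by (simp add: dim_def)
  have "fcomp k i (barycenter (dim k)) = sig (1/4) * sig (1 / real (dim k))"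
    if "i \<in> {1..dim k}" for i
    unfolding fcomp_def block_sum_barycenter[OF jmap_range] using that by (simp add: barycenter_def)
  also have "sig (1/4) * sig (1 / real (dim k)) = 3 * (real (dim k) - 1)"
    using d by (simp add: sig_def field_simps)
  moreover have "{1..dim k} \<noteq> {}" by (simp add: dim_def)
  ultimately have "(\<lambda>i. fcomp k i (barycenter (dim k))) ` {1..dim k} = {3 * (real (dim k) - 1)}"
    by auto
  then show ?thesis by (simp add: Fk_def)
qed

lemma eq_barycenter_if_Fk_le:
  assumes x: "x \<in> open_simplex (dim k)" and F: "Fk k x \<le> 3 * (real (dim k) - 1)"
  shows "x = barycenter (dim k)"
proof -
  define n where "n = (3::nat) ^ (k - 1)"
  define C where "C = 3 * (real (dim k) - 1)"
  define S where "S B = block_sum k B x" for B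
  have d: "dim k = 4 * n" by (simp add: dim_def n_def)
  have n: "real n \<ge> 1" by (simp add: n_def)
  have C: "C > 1" using n by (simp add: C_def d)
  have below: "threshold C (S (jmap i)) \<le> x i" if "i \<in> {1..dim k}" for i
    using threshold_le_coordinate[OF x F[folded C_def] _ that] C by (simp add: S_def)
  have "real n * (\<Sum>B=1..4. threshold C (S B)) = (\<Sum>i=1..dim k. threshold C (S (jmap i)))"
    unfolding d by (rule sum_jmap[symmetric])
  also have "\<dots> \<le> (\<Sum>i=1..dim k. x i)"
    using below by (rule sum_mono)
  also have "\<dots> = 1"
    using x by (simp add: open_simplex_def)
  finally have "(\<Sum>B=1..4. threshold C (S B)) \<le> 12 / (3 + C)"
    using n by (simp add: C_def d field_simps)
  moreover have "\<forall>B\<in>{1..4}. S B > 0"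
    using block_sum_pos[OF x] by (simp add: S_def)
  moreover have "(\<Sum>B=1..4. S B) = 1"
    using x sum_block_sum[of k x] by (simp add: S_def open_simplex_def)
  ultimately have quarter: "S B = 1/4" if "B \<in> {1..4}" for B
    using quarter_if_threshold_sum_le[OF C] that by blast
  have "threshold C (1/4) = 1 / real (dim k)"
    using n by (simp add: threshold_def C_def d field_simps)
  then have "\<forall>i\<in>{1..dim k}. 1 / real (dim k) \<le> x i"
    using below quarter[OF jmap_range] by metis
  then show ?thesis
    using eq_barycenter_if_ge[OF x] by blast
qed

theorem mainTheorem10:
  fixes k :: nat and xs ys :: "nat \<Rightarrow> real"
  assumes "k \<ge> 2"
    and "xs \<in> open_simplex (dim k)" and "ys \<in> open_simplex (dim k)"
    and "Fk k xs = (INF x\<in>open_simplex (dim k). Fk k x)"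
    and "Fk k ys = (INF x\<in>open_simplex (dim k). Fk k x)"
  shows "xs = ys"
proof -
  define u where "u = barycenter (dim k)"
  have u: "u \<in> open_simplex (dim k)"
    unfolding u_def by (rule barycenter_in_open_simplex) (simp add: dim_def)
  have "Fk k u \<le> Fk k x" if "x \<in> open_simplex (dim k)" for x
    using eq_barycenter_if_Fk_le[OF that] Fk_barycenter[of k] unfolding u_def by force
  then have "(INF x\<in>open_simplex (dim k). Fk k x) = Fk k u"
    using u by (intro cInf_eq_minimum) auto
  then have "xs = u" and "ys = u"
    using eq_barycenter_if_Fk_le[OF assms(2)] eq_barycenter_if_Fk_le[OF assms(3)] assms(4,5)
      Fk_barycenter[of k] unfolding u_def by simp_all
  then show ?thesis by simp
qed

end
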